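(* Let $f,g\in\mathrm{Diffeo}^-(\mathbb{R})$ with $f(0)=g(0)=0$ and $f\circ f=g\circ g$. Suppose $0$ is an interior point of $\mathrm{fix}(f\circ f)=\{x\in\mathbb{R}: f(f(x))=x\}$. Then there exists $h\in\mathrm{Diffeo}^+(\mathbb{R})$ with $h(0)=0$, commuting with $f\circ f$, such that $T_0f=(T_0h)^{-1}\circ(T_0g)\circ(T_0h)$; and hence $f$ is conjugate to $g$ by an element of $\mathrm{Diffeo}^+(\mathbb{R})$.
   Context: $\mathrm{Diffeo}(\mathbb{R})$ is the group of $C^\infty$ diffeomorphisms of $\mathbb{R}$ under composition; $\mathrm{Diffeo}^+(\mathbb{R})$ (resp. $\mathrm{Diffeo}^-(\mathbb{R})$) is the set of orientation-preserving (resp. orientation-reversing) diffeomorphisms. For a diffeomorphism $\phi$ with $\phi(0)=0$, $T_0\phi=\phi'(0)X+\frac{\phi''(0)}{2}X^2+\cdots$ is its Taylor series at $0$, an element of the group of formally invertible real formal power series under formal composition, with $^{-1}$ the compositional inverse. *)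

theory Defs
  imports "HOL-Analysis.Analysis" "HOL-Computational_Algebra.Formal_Power_Series"
begin

definition smooth_real :: "(real \<Rightarrow> real) \<Rightarrow> bool" where
  "smooth_real f \<longleftrightarrow> (\<forall>n x. ((deriv ^^ n) f) differentiable (at x))"

definition diffeo :: "(real \<Rightarrow> real) \<Rightarrow> bool" where
  "diffeo f \<longleftrightarrow> bij f \<and> smooth_real f \<and> smooth_real (inv f)"

definition diffeo_plus :: "(real \<Rightarrow> real) \<Rightarrow> bool" where
  "diffeo_plus f \<longleftrightarrow> diffeo f \<and> strict_mono f"

definition diffeo_minus :: "(real \<Rightarrow> real) \<Rightarrow> bool" where
  "diffeo_minus f \<longleftrightarrow> diffeo f \<and> (\<forall>x y. x < y \<longrightarrow> f y < f x)"

definition taylor0 :: "(real \<Rightarrow> real) \<Rightarrow> real fps" where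
  "taylor0 f = Abs_fps (\<lambda>n. (deriv ^^ n) f 0 / fact n)"

end

theory Submission
  imports Defs
begin

(* Near 0 both f and g are orientation-reversing involutions, and the chart x \<mapsto> (x - f x)/2
   turns f into x \<mapsto> -x there; composing the charts of f and g gives a local conjugacy k0 from
   f to g with k0'(0) = 1. A cutoff deforms k0 into a diffeomorphism of [0,\<infinity>) that is k0 near 0
   and the identity far out, so it commutes with f \<circ> f = g \<circ> g. Setting k x := g (k (f\<^sup>-\<^sup>1 x))
   for x < 0 extends it to a global conjugacy k \<circ> f = g \<circ> k, which is smooth because near 0 it
   still coincides with k0. Such a k commutes with f \<circ> f, and the Taylor expansion at 0 turns
   composition into formal composition. *)

unbundle no vec_syntax
notation fps_nth (infixl \<open>$\<close> 75)

section \<open>Smooth functions\<close>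

lemma higher_deriv_const:
  "(deriv ^^ n) (\<lambda>_::real. c::real) = (\<lambda>_. if n = 0 then c else 0)"
proof (induction n arbitrary: c)
  case (Suc n)
  have "deriv (\<lambda>_::real. c) = (\<lambda>_. 0)" by (rule ext) simp
  then show ?case using Suc by (simp add: funpow_Suc_right del: funpow.simps)
qed simp

lemma smooth_const: "smooth_real (\<lambda>_. c)"
  unfolding smooth_real_def higher_deriv_const by simp

lemma smooth_DERIV: "smooth_real f \<Longrightarrow> DERIV f x :> deriv f x"
  unfolding smooth_real_def by (metis DERIV_deriv_iff_real_differentiable funpow_0)

lemma smooth_deriv: "smooth_real f \<Longrightarrow> smooth_real (deriv f)"
  unfolding smooth_real_def by (metis comp_apply funpow_Suc_right)

lemma smoothI_deriv: "(\<And>x. f differentiable (at x)) \<Longrightarrow> smooth_real (deriv f) \<Longrightarrow> smooth_real f"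
  unfolding smooth_real_def by (metis funpow_0 funpow_Suc_right comp_apply not0_implies_Suc)

lemma smooth_id: "smooth_real (\<lambda>x. x)"
proof (rule smoothI_deriv)
  have "deriv (\<lambda>x::real. x) = (\<lambda>_. 1)" by (rule ext) simp
  then show "smooth_real (deriv (\<lambda>x::real. x))" by (simp add: smooth_const)
qed simp

(* The derivative of each of these combinations is again such a combination, so rule induction
   shows that the closure is differentiable and closed under deriv, hence consists of smooth
   functions. This yields all the closure properties of smooth functions at once. *)
inductive_set smooth_closure :: "(real \<Rightarrow> real) set" where
  smooth: "smooth_real f \<Longrightarrow> f \<in> smooth_closure"
| add: "f \<in> smooth_closure \<Longrightarrow> g \<in> smooth_closure \<Longrightarrow> (\<lambda>x. f x + g x) \<in> smooth_closure"
| mult: "f \<in> smooth_closure \<Longrightarrow> g \<in> smooth_closure \<Longrightarrow> (\<lambda>x. f x * g x) \<in> smooth_closure"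
| comp: "f \<in> smooth_closure \<Longrightarrow> g \<in> smooth_closure \<Longrightarrow> (\<lambda>x. f (g x)) \<in> smooth_closure"
| inverse: "f \<in> smooth_closure \<Longrightarrow> (\<forall>x. f x \<noteq> 0) \<Longrightarrow> (\<lambda>x. inverse (f x)) \<in> smooth_closure"
| inv: "f \<in> smooth_closure \<Longrightarrow> bij f \<Longrightarrow> (\<forall>x. deriv f x \<noteq> 0) \<Longrightarrow> inv f \<in> smooth_closure"

lemma smooth_closure_deriv:
  assumes "f \<in> smooth_closure"
  shows "(\<forall>x. DERIV f x :> deriv f x) \<and> deriv f \<in> smooth_closure"
  using assms
proof (induction rule: smooth_closure.induct)
  case (smooth f)
  then show ?case using smooth_DERIV smooth_deriv smooth_closure.smooth by blast
next
  case (add f g)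
  have d: "DERIV (\<lambda>x. f x + g x) x :> deriv f x + deriv g x" for x
    using add by (auto intro!: derivative_eq_intros)
  then have "deriv (\<lambda>x. f x + g x) = (\<lambda>x. deriv f x + deriv g x)"
    by (auto intro!: ext DERIV_imp_deriv)
  moreover have "(\<lambda>x. deriv f x + deriv g x) \<in> smooth_closure"
    using add by (intro smooth_closure.add) auto
  ultimately show ?case using d by auto
next
  case (mult f g)
  have d: "DERIV (\<lambda>x. f x * g x) x :> deriv f x * g x + f x * deriv g x" for x
    using mult by (auto intro!: derivative_eq_intros)
  then have "deriv (\<lambda>x. f x * g x) = (\<lambda>x. deriv f x * g x + f x * deriv g x)"
    by (auto intro!: ext DERIV_imp_deriv)
  moreover have "(\<lambda>x. deriv f x * g x + f x * deriv g x) \<in> smooth_closure"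
    using mult by (intro smooth_closure.add smooth_closure.mult) auto
  ultimately show ?case using d by auto
next
  case (comp f g)
  have d: "DERIV (\<lambda>x. f (g x)) x :> deriv f (g x) * deriv g x" for x
    using comp DERIV_chain2 by blast
  then have "deriv (\<lambda>x. f (g x)) = (\<lambda>x. deriv f (g x) * deriv g x)"
    by (auto intro!: ext DERIV_imp_deriv)
  moreover have "(\<lambda>x. deriv f (g x) * deriv g x) \<in> smooth_closure"
    using comp by (intro smooth_closure.mult[OF smooth_closure.comp]) auto
  ultimately show ?case using d by auto
next
  case (inverse f)
  let ?r = "\<lambda>x. inverse (f x)"
  have d: "DERIV ?r x :> (\<lambda>_. -1) x * (deriv f x * (?r x * ?r x))" for x
    using DERIV_inverse_fun[of f "deriv f x" x] inverse by (simp add: power2_eq_square)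
  then have e: "deriv ?r = (\<lambda>x. (\<lambda>_. -1) x * (deriv f x * (?r x * ?r x)))"
    by (intro ext DERIV_imp_deriv)
  have r: "?r \<in> smooth_closure" using inverse by (intro smooth_closure.inverse) auto
  have "deriv ?r \<in> smooth_closure" unfolding e
    by (rule smooth_closure.mult[OF smooth_closure.smooth[OF smooth_const]
          smooth_closure.mult[OF _ smooth_closure.mult[OF r r]]]) (use inverse in auto)
  then show ?case using d e by (simp add: DERIV_imp_deriv)
next
  case (inv f)
  have fi: "f (inv f y) = y" and if_: "inv f (f y) = y" for y
    using \<open>bij f\<close> by (simp_all add: bij_is_inj bij_is_surj surj_f_inv_f)
  have d: "DERIV (inv f) y :> inverse (deriv f (inv f y))" for y
  proof (rule DERIV_inverse_function[where a="y-1" and b="y+1"])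
    show "DERIV f (inv f y) :> deriv f (inv f y)" "deriv f (inv f y) \<noteq> 0" using inv by auto
    show "isCont (inv f) y"
      using isCont_inverse_function[of 1 "inv f y" "inv f" f] if_ fi inv
      by (metis DERIV_isCont zero_less_one)
  qed (auto simp: fi)
  then have e: "deriv (inv f) = (\<lambda>y. inverse (deriv f (inv f y)))"
    by (auto intro!: ext DERIV_imp_deriv)
  have "inv f \<in> smooth_closure" using inv by (intro smooth_closure.inv) auto
  then have "deriv (inv f) \<in> smooth_closure" unfolding e using inv
    by (intro smooth_closure.inverse[OF smooth_closure.comp]) auto
  then show ?case using d e by simp
qed

lemma smooth_closure_imp_smooth:
  assumes "f \<in> smooth_closure" shows "smooth_real f"
proof -
  have "\<forall>f\<in>smooth_closure. (deriv ^^ n) f \<in> smooth_closure" for n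
  proof (induction n)
    case (Suc n) then show ?case
      using smooth_closure_deriv by (simp add: funpow_Suc_right del: funpow.simps)
  qed simp
  then show ?thesis unfolding smooth_real_def
    using assms smooth_closure_deriv real_differentiable_def by blast
qed

lemma smooth_add: "smooth_real f \<Longrightarrow> smooth_real g \<Longrightarrow> smooth_real (\<lambda>x. f x + g x)"
  by (rule smooth_closure_imp_smooth[OF smooth_closure.add[OF smooth_closure.smooth smooth_closure.smooth]])

lemma smooth_mult: "smooth_real f \<Longrightarrow> smooth_real g \<Longrightarrow> smooth_real (\<lambda>x. f x * g x)"
  by (rule smooth_closure_imp_smooth[OF smooth_closure.mult[OF smooth_closure.smooth smooth_closure.smooth]])

lemma smooth_comp: "smooth_real f \<Longrightarrow> smooth_real g \<Longrightarrow> smooth_real (\<lambda>x. f (g x))"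
  by (rule smooth_closure_imp_smooth[OF smooth_closure.comp[OF smooth_closure.smooth smooth_closure.smooth]])

lemma smooth_affine: "smooth_real (\<lambda>x. c + d * x)"
  by (rule smooth_add[OF smooth_const smooth_mult[OF smooth_const smooth_id]])

lemma smooth_diff:
  assumes "smooth_real f" "smooth_real g" shows "smooth_real (\<lambda>x. f x - g x)"
proof -
  have "smooth_real (\<lambda>x. f x + (-1) * g x)"
    by (rule smooth_add[OF assms(1) smooth_mult[OF smooth_const assms(2)]])
  then show ?thesis by simp
qed

lemma smooth_inverse: "smooth_real f \<Longrightarrow> (\<And>x. f x \<noteq> 0) \<Longrightarrow> smooth_real (\<lambda>x. inverse (f x))"
  by (rule smooth_closure_imp_smooth[OF smooth_closure.inverse[OF smooth_closure.smooth]]) auto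

lemma smooth_inv: "smooth_real f \<Longrightarrow> bij f \<Longrightarrow> (\<And>x. deriv f x \<noteq> 0) \<Longrightarrow> smooth_real (inv f)"
  by (rule smooth_closure_imp_smooth[OF smooth_closure.inv[OF smooth_closure.smooth]]) auto

lemma smooth_locally:
  assumes "\<And>x. \<exists>s. smooth_real s \<and> (\<forall>\<^sub>F y in nhds x. f y = s y)"
  shows "smooth_real f"
  unfolding smooth_real_def
proof (intro allI)
  fix n x
  obtain s where s: "smooth_real s" "\<forall>\<^sub>F y in nhds x. f y = s y" using assms by blast
  have "\<forall>\<^sub>F z in nhds x. \<forall>\<^sub>F y in nhds z. f y = s y"
    using s(2) by (simp add: eventually_eventually)
  then have ev: "\<forall>\<^sub>F z in nhds x. (deriv ^^ n) f z = (deriv ^^ n) s z"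
    by (rule eventually_mono) (rule higher_deriv_cong_ev, assumption, rule refl)
  obtain D where "DERIV ((deriv ^^ n) s) x :> D"
    using s(1) by (auto simp: smooth_real_def real_differentiable_def)
  then have "DERIV ((deriv ^^ n) f) x :> D" using DERIV_cong_ev[OF refl ev refl] by simp
  then show "(deriv ^^ n) f differentiable (at x)" by (auto simp: real_differentiable_def)
qed

lemma deriv_add_smooth:
  "smooth_real f \<Longrightarrow> smooth_real g \<Longrightarrow> deriv (\<lambda>x. f x + g x) = (\<lambda>x. deriv f x + deriv g x)"
  by (intro ext DERIV_imp_deriv derivative_intros smooth_DERIV)

lemma deriv_mult_smooth:
  "smooth_real f \<Longrightarrow> smooth_real g \<Longrightarrow> deriv (\<lambda>x. f x * g x) = (\<lambda>x. deriv f x * g x + f x * deriv g x)"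
  by (intro ext DERIV_imp_deriv) (auto intro!: derivative_eq_intros smooth_DERIV)

lemma deriv_comp_smooth:
  "smooth_real f \<Longrightarrow> smooth_real g \<Longrightarrow> deriv (\<lambda>x. f (g x)) = (\<lambda>x. deriv f (g x) * deriv g x)"
  by (intro ext DERIV_imp_deriv DERIV_chain2 smooth_DERIV)

lemma higher_deriv_add_smooth:
  "smooth_real f \<Longrightarrow> smooth_real g \<Longrightarrow>
    (deriv ^^ n) (\<lambda>x. f x + g x) = (\<lambda>x. (deriv ^^ n) f x + (deriv ^^ n) g x)"
proof (induction n arbitrary: f g)
  case (Suc n)
  have "(deriv ^^ Suc n) (\<lambda>x. f x + g x) = (deriv ^^ n) (\<lambda>x. deriv f x + deriv g x)"
    using Suc.prems by (simp add: funpow_Suc_right deriv_add_smooth del: funpow.simps)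
  also have "\<dots> = (\<lambda>x. (deriv ^^ n) (deriv f) x + (deriv ^^ n) (deriv g) x)"
    using Suc by (simp add: smooth_deriv)
  finally show ?case by (simp add: funpow_Suc_right del: funpow.simps)
qed simp

lemma diffeo_DERIV: "diffeo f \<Longrightarrow> DERIV f x :> deriv f x"
  unfolding diffeo_def using smooth_DERIV by blast

lemma diffeo_inv: "diffeo f \<Longrightarrow> diffeo (inv f)"
  unfolding diffeo_def by (simp add: bij_imp_bij_inv inv_inv_eq)

lemma diffeo_deriv_nonzero:
  assumes "diffeo f" shows "deriv f x \<noteq> 0"
proof -
  have b: "bij f" using assms by (simp add: diffeo_def)
  have "DERIV (\<lambda>y. f (inv f y)) (f x) :> deriv f (inv f (f x)) * deriv (inv f) (f x)"
    by (intro DERIV_chain2 diffeo_DERIV assms diffeo_inv)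
  moreover have "(\<lambda>y. f (inv f y)) = (\<lambda>y. y)" "inv f (f x) = x"
    using b by (simp_all add: bij_is_inj bij_is_surj surj_f_inv_f)
  ultimately have "DERIV (\<lambda>y. y) (f x) :> deriv f x * deriv (inv f) (f x)" by simp
  then have "deriv f x * deriv (inv f) (f x) = 1" using DERIV_ident DERIV_unique by blast
  then show ?thesis by auto
qed

lemma diffeoI:
  assumes "smooth_real f" "bij f" "\<And>x. deriv f x \<noteq> 0"
  shows "diffeo f"
  unfolding diffeo_def using assms smooth_inv by blast

lemma decreasing_less_iff:
  fixes f :: "real \<Rightarrow> real"
  assumes "\<forall>x y. x < y \<longrightarrow> f y < f x"
  shows "f x < f y \<longleftrightarrow> y < x"
proof
  assume "f x < f y"
  show "y < x"
  proof (rule ccontr)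
    assume "\<not> y < x"
    then consider "x = y" | "x < y" by linarith
    then show False
    proof cases
      case 2
      then have "f y < f x" using assms by blast
      with \<open>f x < f y\<close> show False by simp
    qed (use \<open>f x < f y\<close> in simp)
  qed
qed (use assms in auto)

lemma decreasing_inv:
  fixes f :: "real \<Rightarrow> real"
  assumes "bij f" "\<forall>x y. x < y \<longrightarrow> f y < f x"
  shows "\<forall>x y. x < y \<longrightarrow> inv f y < inv f x"
proof (intro allI impI)
  fix x y :: real assume "x < y"
  then have "f (inv f x) < f (inv f y)" using assms(1) by (simp add: bij_is_surj surj_f_inv_f)
  then show "inv f y < inv f x" using decreasing_less_iff[OF assms(2)] by blast
qed

lemma decreasing_deriv_nonpos:
  fixes f :: "real \<Rightarrow> real"
  assumes "DERIV f x :> D" and "\<forall>x y. x < y \<longrightarrow> f y < f x"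
  shows "D \<le> 0"
proof (rule ccontr)
  assume "\<not> D \<le> 0"
  then obtain d where "d > 0" "\<forall>h>0. h < d \<longrightarrow> f x < f (x + h)"
    using DERIV_pos_inc_right[OF assms(1)] by force
  then have "f x < f (x + d/2)" by simp
  moreover have "f (x + d/2) < f x" using assms(2) \<open>d > 0\<close> by simp
  ultimately show False by simp
qed

lemma strict_mono_surj:
  fixes u :: "real \<Rightarrow> real"
  assumes "continuous_on UNIV u" "strict_mono u" "\<And>t. \<exists>x. u x \<le> t" "\<And>t. \<exists>x. u x \<ge> t"
  shows "surj u"
proof -
  have "\<exists>x. u x = t" for t
  proof -
    obtain a b where ab: "u a \<le> t" "u b \<ge> t" using assms(3,4) by blast
    have "a \<le> b"
    proof (rule ccontr)
      assume "\<not> a \<le> b"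
      then have "u b < u a" using assms(2) by (simp add: strict_mono_less)
      then show False using ab by simp
    qed
    then show ?thesis using IVT'[of u a t b] ab continuous_on_subset[OF assms(1)] by blast
  qed
  then show ?thesis by (metis surjI)
qed

lemma eventually_nhds_isCont_compose:
  "isCont h x \<Longrightarrow> \<forall>\<^sub>F y in nhds (h x). P y \<Longrightarrow> \<forall>\<^sub>F y in nhds x. P (h y)"
  by (rule eventually_compose_filterlim) (simp_all add: isCont_def tendsto_at_iff_tendsto_nhds)

section \<open>Taylor series at 0\<close>

lemma taylor0_nth: "taylor0 f $ n = (deriv ^^ n) f 0 / fact n"
  by (simp add: taylor0_def)

lemma taylor0_add:
  "smooth_real f \<Longrightarrow> smooth_real g \<Longrightarrow> taylor0 (\<lambda>x. f x + g x) = taylor0 f + taylor0 g"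
  by (intro fps_ext) (simp add: taylor0_nth higher_deriv_add_smooth add_divide_distrib)

lemma taylor0_deriv: "taylor0 (deriv f) = fps_deriv (taylor0 f)"
proof (intro fps_ext)
  fix n
  have "(deriv ^^ n) (deriv f) = (deriv ^^ Suc n) f"
    by (simp add: funpow_Suc_right del: funpow.simps)
  moreover have c: "a / b = (c + 1) * (a / ((c + 1) * b))" if "c \<ge> 0" for a b c :: real
    using that by (subst times_divide_eq_right, subst mult_divide_mult_cancel_left) auto
  ultimately show "taylor0 (deriv f) $ n = fps_deriv (taylor0 f) $ n"
    unfolding fps_deriv_nth taylor0_nth by (subst c[of "real n"]) (auto simp: fact_Suc algebra_simps)
qed

lemma taylor0_Suc: "taylor0 f $ Suc n = taylor0 (deriv f) $ n / of_nat (Suc n)"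
  by (simp add: taylor0_deriv field_simps del: of_nat_Suc)

lemma taylor0_mult:
  assumes "smooth_real f" "smooth_real g"
  shows "taylor0 (\<lambda>x. f x * g x) = taylor0 f * taylor0 g"
proof (intro fps_ext)
  fix n show "taylor0 (\<lambda>x. f x * g x) $ n = (taylor0 f * taylor0 g) $ n"
    using assms
  proof (induction n arbitrary: f g)
    case 0 then show ?case by (simp add: taylor0_nth)
  next
    case (Suc n)
    have sd: "smooth_real (deriv f)" "smooth_real (deriv g)" using Suc.prems by (simp_all add: smooth_deriv)
    have "taylor0 (\<lambda>x. f x * g x) $ Suc n
        = taylor0 (\<lambda>x. deriv f x * g x + f x * deriv g x) $ n / of_nat (Suc n)"
      by (simp only: taylor0_Suc deriv_mult_smooth Suc.prems)
    also have "taylor0 (\<lambda>x. deriv f x * g x + f x * deriv g x)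
        = taylor0 (\<lambda>x. deriv f x * g x) + taylor0 (\<lambda>x. f x * deriv g x)"
      using Suc.prems sd by (intro taylor0_add smooth_mult)
    also have "(taylor0 (\<lambda>x. deriv f x * g x) + taylor0 (\<lambda>x. f x * deriv g x)) $ n
        = fps_deriv (taylor0 f * taylor0 g) $ n"
      using Suc.IH Suc.prems sd by (simp add: taylor0_deriv algebra_simps)
    finally show ?case by (simp only: fps_deriv_nth) (simp del: of_nat_Suc)
  qed
qed

lemma taylor0_comp:
  assumes "smooth_real f" "smooth_real g" "g 0 = 0"
  shows "taylor0 (\<lambda>x. f (g x)) = taylor0 f oo taylor0 g"
proof (intro fps_ext)
  have g0: "taylor0 g $ 0 = 0" using assms(3) by (simp add: taylor0_nth)
  fix n show "taylor0 (\<lambda>x. f (g x)) $ n = (taylor0 f oo taylor0 g) $ n"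
    using assms(1)
  proof (induction n arbitrary: f rule: less_induct)
    case (less n)
    show ?case
    proof (cases n)
      case 0 then show ?thesis using assms(3) by (simp add: taylor0_nth)
    next
      case (Suc m)
      have sd: "smooth_real (deriv f)" "smooth_real (deriv g)"
        using less.prems assms(2) by (simp_all add: smooth_deriv)
      have "taylor0 (\<lambda>x. f (g x)) $ Suc m
          = (taylor0 (\<lambda>x. deriv f (g x)) * taylor0 (deriv g)) $ m / of_nat (Suc m)"
        by (simp only: taylor0_Suc deriv_comp_smooth less.prems assms(2)
              taylor0_mult[OF smooth_comp[OF sd(1) assms(2)] sd(2)])
      also have "(taylor0 (\<lambda>x. deriv f (g x)) * taylor0 (deriv g)) $ m
          = ((taylor0 (deriv f) oo taylor0 g) * taylor0 (deriv g)) $ m"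
        unfolding fps_mult_nth using less.IH[of _ "deriv f"] sd Suc by (intro sum.cong) auto
      also have "\<dots> = fps_deriv (taylor0 f oo taylor0 g) $ m"
        by (simp only: fps_compose_deriv[OF g0] taylor0_deriv)
      finally show ?thesis unfolding Suc by (simp only: fps_deriv_nth) (simp del: of_nat_Suc)
    qed
  qed
qed

lemma taylor0_id: "taylor0 (\<lambda>x. x) = fps_X"
proof (intro fps_ext)
  fix n
  have "deriv (\<lambda>x::real. x) = (\<lambda>_. 1)" by (rule ext) simp
  then show "taylor0 (\<lambda>x. x) $ n = fps_X $ n"
    by (cases n) (simp_all add: taylor0_nth funpow_Suc_right higher_deriv_const del: funpow.simps)
qed

lemma taylor0_inv:
  assumes "diffeo k" "k 0 = 0"
  shows "taylor0 (inv k) = fps_inv (taylor0 k)"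
proof -
  have k: "bij k" "smooth_real k" "smooth_real (inv k)" using assms(1) by (auto simp: diffeo_def)
  have T0: "taylor0 k $ 0 = 0" and T1: "taylor0 k $ 1 \<noteq> 0"
    using assms diffeo_deriv_nonzero[OF assms(1), of 0] by (simp_all add: taylor0_nth)
  have "taylor0 (inv k) oo taylor0 k = taylor0 (\<lambda>x. inv k (k x))"
    using taylor0_comp[OF k(3,2) assms(2)] by simp
  also have "\<dots> = fps_inv (taylor0 k) oo taylor0 k"
    using k(1) fps_inv[OF T0 T1] by (simp add: bij_is_inj taylor0_id)
  finally show ?thesis using fps_compose_inj_right[OF T0 T1] by blast
qed

lemma taylor0_conj:
  assumes "diffeo k" "k 0 = 0" "smooth_real g" "g 0 = 0"
  shows "taylor0 (inv k \<circ> g \<circ> k) = fps_inv (taylor0 k) oo taylor0 g oo taylor0 k"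
proof -
  have k: "smooth_real k" "smooth_real (inv k)" using assms(1) by (auto simp: diffeo_def)
  have T0: "taylor0 k $ 0 = 0" "taylor0 g $ 0 = 0" using assms(2,4) by (simp_all add: taylor0_nth)
  have "taylor0 (inv k \<circ> g \<circ> k) = taylor0 (inv k) oo taylor0 (\<lambda>x. g (k x))"
    using taylor0_comp[OF k(2) smooth_comp[OF assms(3) k(1)]] assms(2,4) by (simp add: comp_def)
  also have "\<dots> = taylor0 (inv k) oo (taylor0 g oo taylor0 k)"
    using taylor0_comp[OF assms(3) k(1) assms(2)] by simp
  finally show ?thesis by (simp add: fps_compose_assoc[OF T0] taylor0_inv[OF assms(1,2)])
qed

section \<open>A smooth step function\<close>

definition flat_exp :: "real poly \<Rightarrow> real \<Rightarrow> real" where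
  "flat_exp p t = (if t \<le> 0 then 0 else poly p (inverse t) * exp (- inverse t))"

definition flat_exp_deriv_poly :: "real poly \<Rightarrow> real poly" where
  "flat_exp_deriv_poly p = monom 1 2 * (p - pderiv p)"

lemma poly_times_exp_neg_tendsto_0:
  fixes p :: "real poly" shows "((\<lambda>s. poly p s * exp (- s)) \<longlongrightarrow> 0) at_top"
proof -
  have e: "poly p s * exp (- s) = (\<Sum>i\<le>degree p. coeff p i * (s ^ i / exp s))" for s
    unfolding poly_altdef exp_minus sum_distrib_right by (simp add: divide_inverse mult.assoc)
  have "((\<lambda>s. \<Sum>i\<le>degree p. coeff p i * (s ^ i / exp s)) \<longlongrightarrow> (\<Sum>i\<le>degree p. coeff p i * 0)) at_top"
    by (intro tendsto_sum tendsto_mult tendsto_const tendsto_power_div_exp_0)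
  then show ?thesis unfolding e by simp
qed

lemma flat_exp_div_tendsto_0: "((\<lambda>y. flat_exp p y / y) \<longlongrightarrow> 0) (at_right 0)"
proof -
  have "((\<lambda>y. poly (pCons 0 p) (inverse y) * exp (- inverse y)) \<longlongrightarrow> 0) (at_right 0)"
    by (rule filterlim_compose[OF poly_times_exp_neg_tendsto_0 filterlim_inverse_at_top_right])
  moreover have "\<forall>\<^sub>F y in at_right 0. poly (pCons 0 p) (inverse y) * exp (- inverse y) = flat_exp p y / y"
    using eventually_at_right_less[of "0::real"]
    by eventually_elim (auto simp: flat_exp_def field_simps)
  ultimately show ?thesis by (rule Lim_transform_eventually)
qed

lemma DERIV_flat_exp: "DERIV (flat_exp p) t :> flat_exp (flat_exp_deriv_poly p) t"
proof -
  consider "t > 0" | "t < 0" | "t = 0" by linarith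
  then show ?thesis
  proof cases
    case 1
    have "DERIV (\<lambda>t. poly p (inverse t) * exp (- inverse t)) t :>
        poly (pderiv p) (inverse t) * (- inverse (t\<^sup>2)) * exp (- inverse t)
          + poly p (inverse t) * (exp (- inverse t) * inverse (t\<^sup>2))"
      using 1 by (auto intro!: derivative_eq_intros DERIV_chain2[OF poly_DERIV] simp: power2_eq_square)
    moreover have "poly (pderiv p) (inverse t) * (- inverse (t\<^sup>2)) * exp (- inverse t)
          + poly p (inverse t) * (exp (- inverse t) * inverse (t\<^sup>2))
        = flat_exp (flat_exp_deriv_poly p) t"
      using 1 by (simp add: flat_exp_def flat_exp_deriv_poly_def poly_monom algebra_simps
          power2_eq_square power_inverse)
    ultimately have "DERIV (\<lambda>t. poly p (inverse t) * exp (- inverse t)) t :>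
        flat_exp (flat_exp_deriv_poly p) t" by simp
    then show ?thesis
      by (rule has_field_derivative_transform_within_open[where S="{0<..}"])
         (use 1 in \<open>auto simp: flat_exp_def\<close>)
  next
    case 2
    have "DERIV (\<lambda>t. 0) t :> flat_exp (flat_exp_deriv_poly p) t" using 2 by (simp add: flat_exp_def)
    then show ?thesis
      by (rule has_field_derivative_transform_within_open[where S="{..<0}"])
         (use 2 in \<open>auto simp: flat_exp_def\<close>)
  next
    case 3
    have "((\<lambda>y. (flat_exp p y - flat_exp p 0) / (y - 0)) \<longlongrightarrow> 0) (at 0)"
    proof (rule filterlim_split_at_real)
      show "((\<lambda>y. (flat_exp p y - flat_exp p 0) / (y - 0)) \<longlongrightarrow> 0) (at_right 0)"
        using flat_exp_div_tendsto_0[of p] by (simp add: flat_exp_def)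
      have "(-1::real) < 0" by simp
      from eventually_at_left_real[OF this]
      have "\<forall>\<^sub>F y in at_left 0. 0 = (flat_exp p y - flat_exp p 0) / (y - 0)"
        by eventually_elim (auto simp: flat_exp_def)
      then show "((\<lambda>y. (flat_exp p y - flat_exp p 0) / (y - 0)) \<longlongrightarrow> 0) (at_left 0)"
        by (rule Lim_transform_eventually[OF tendsto_const])
    qed
    then show ?thesis unfolding 3 has_field_derivative_iff by (simp add: flat_exp_def)
  qed
qed

lemma smooth_flat_exp: "smooth_real (flat_exp p)"
proof -
  have "deriv (flat_exp p) = flat_exp (flat_exp_deriv_poly p)" for p
    by (intro ext DERIV_imp_deriv DERIV_flat_exp)
  then have "(deriv ^^ n) (flat_exp p) = flat_exp ((flat_exp_deriv_poly ^^ n) p)" for n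
    by (induction n) simp_all
  then show ?thesis unfolding smooth_real_def using DERIV_flat_exp real_differentiable_def by metis
qed

definition step :: "real \<Rightarrow> real" where
  "step t = flat_exp 1 t * inverse (flat_exp 1 t + flat_exp 1 (1 - t))"

lemma flat_exp_1: "flat_exp 1 t = (if t \<le> 0 then 0 else exp (- inverse t))"
  by (simp add: flat_exp_def)

lemma step_denominator_pos: "flat_exp 1 t + flat_exp 1 (1 - t) > 0"
  by (simp add: flat_exp_1 add_pos_nonneg add_nonneg_pos)

lemma smooth_step: "smooth_real step"
proof -
  have "smooth_real (\<lambda>t. flat_exp 1 (1 - t))"
    using smooth_comp[OF smooth_flat_exp smooth_affine, of 1 1 "-1"] by simp
  then have "smooth_real (\<lambda>t. flat_exp 1 t * inverse (flat_exp 1 t + flat_exp 1 (1 - t)))"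
    using step_denominator_pos[THEN less_imp_neq, symmetric]
    by (intro smooth_mult smooth_inverse smooth_add smooth_flat_exp) auto
  then show ?thesis by (simp add: step_def[abs_def])
qed

lemma step_nonpos: "t \<le> 0 \<Longrightarrow> step t = 0"
  by (simp add: step_def flat_exp_1)

lemma step_ge_1: "t \<ge> 1 \<Longrightarrow> step t = 1"
  by (simp add: step_def flat_exp_1)

lemma step_bounds: "0 \<le> step t" "step t \<le> 1"
proof -
  have "flat_exp 1 t \<ge> 0" "flat_exp 1 (1 - t) \<ge> 0" by (simp_all add: flat_exp_1)
  then show "0 \<le> step t" "step t \<le> 1"
    unfolding step_def using step_denominator_pos[of t] by (simp_all add: field_simps)
qed

lemma step_deriv_bounded: "\<exists>C>0. \<forall>t. \<bar>deriv step t\<bar> \<le> C"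
proof -
  have "continuous_on {0..1} (deriv step)"
    by (meson DERIV_isCont continuous_at_imp_continuous_on smooth_DERIV smooth_deriv smooth_step)
  then have "bounded (deriv step ` {0..1})"
    by (intro compact_imp_bounded compact_continuous_image) auto
  then obtain C where C: "C > 0" "\<forall>t\<in>{0..1}. \<bar>deriv step t\<bar> \<le> C"
    unfolding bounded_pos by auto
  have "deriv step t = 0" if "t \<notin> {0..1}" for t
  proof -
    have "\<forall>\<^sub>F s in nhds t. step s = (if t < 0 then 0 else 1)"
    proof (cases "t < 0")
      case True
      then show ?thesis using eventually_nhds_in_open[of "{..<0}" t] by (auto elim!: eventually_mono simp: step_nonpos)
    next
      case False
      then have "t > 1" using that by auto
      then show ?thesis using eventually_nhds_in_open[of "{1<..}" t] by (auto elim!: eventually_mono simp: step_ge_1)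
    qed
    then show ?thesis using deriv_cong_ev[of step _ t t] by simp
  qed
  then show ?thesis using C by (metis abs_zero order.strict_implies_order)
qed

lemma cutoff_family:
  obtains C :: real where "C > 0" and "\<And>a. a > 0 \<Longrightarrow> \<exists>\<rho>. smooth_real \<rho> \<and> (\<forall>x\<le>a. \<rho> x = 1)
      \<and> (\<forall>x\<ge>2 * a. \<rho> x = 0) \<and> (\<forall>x. 0 \<le> \<rho> x \<and> \<rho> x \<le> 1) \<and> (\<forall>x. \<bar>deriv \<rho> x\<bar> \<le> C / a)"
proof -
  obtain C where C: "C > 0" "\<And>t. \<bar>deriv step t\<bar> \<le> C" using step_deriv_bounded by blast
  have "\<exists>\<rho>. smooth_real \<rho> \<and> (\<forall>x\<le>a. \<rho> x = 1) \<and> (\<forall>x\<ge>2 * a. \<rho> x = 0)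
      \<and> (\<forall>x. 0 \<le> \<rho> x \<and> \<rho> x \<le> 1) \<and> (\<forall>x. \<bar>deriv \<rho> x\<bar> \<le> C / a)" if a: "a > 0" for a
  proof (intro exI conjI allI impI)
    let ?\<rho> = "\<lambda>x. step (2 + (-1/a) * x)"
    show "smooth_real ?\<rho>" by (rule smooth_comp[OF smooth_step smooth_affine])
    show "?\<rho> x = 1" if "x \<le> a" for x using a that by (intro step_ge_1) (auto simp: field_simps)
    show "?\<rho> x = 0" if "x \<ge> 2 * a" for x using a that by (intro step_nonpos) (auto simp: field_simps)
    show "0 \<le> ?\<rho> x" "?\<rho> x \<le> 1" for x using step_bounds by auto
    have "deriv ?\<rho> x = deriv step (2 + (-1/a) * x) * (-1/a)" for x
      using a by (intro DERIV_imp_deriv DERIV_chain2[OF smooth_DERIV[OF smooth_step]])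
         (auto intro!: derivative_eq_intros)
    then show "\<bar>deriv ?\<rho> x\<bar> \<le> C / a" for x
      using C a by (simp add: abs_mult divide_right_mono)
  qed
  with C(1) that show ?thesis by blast
qed

section \<open>Linearising an involution\<close>

definition invol_chart :: "(real \<Rightarrow> real) \<Rightarrow> real \<Rightarrow> real" where
  "invol_chart f = (\<lambda>x. (x - f x) / 2)"

lemma invol_chart_flip: "f (f x) = x \<Longrightarrow> invol_chart f (f x) = - invol_chart f x"
  by (simp add: invol_chart_def field_simps)

context
  fixes f :: "real \<Rightarrow> real"
  assumes smooth_f: "smooth_real f" and decreasing_f: "\<forall>x y. x < y \<longrightarrow> f y < f x"
begin

lemma DERIV_invol_chart: "DERIV (invol_chart f) x :> (1 - deriv f x) / 2"
  unfolding invol_chart_def using smooth_DERIV[OF smooth_f, of x] by (auto intro!: derivative_eq_intros)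

lemma invol_chart_deriv_ge: "deriv (invol_chart f) x \<ge> 1/2"
  using DERIV_imp_deriv[OF DERIV_invol_chart]
    decreasing_deriv_nonpos[OF smooth_DERIV[OF smooth_f] decreasing_f] by simp

lemma smooth_invol_chart: "smooth_real (invol_chart f)"
proof -
  have "smooth_real (\<lambda>x. (1/2) * x + (-1/2) * f x)"
    by (rule smooth_add[OF smooth_mult[OF smooth_const smooth_id] smooth_mult[OF smooth_const smooth_f]])
  moreover have "invol_chart f = (\<lambda>x. (1/2) * x + (-1/2) * f x)"
    by (auto simp: invol_chart_def field_simps)
  ultimately show ?thesis by simp
qed

lemma strict_mono_invol_chart: "strict_mono (invol_chart f)"
proof (rule strict_monoI)
  fix x y :: real assume "x < y"
  moreover from this have "f y < f x" using decreasing_f by blast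
  ultimately show "invol_chart f x < invol_chart f y" by (simp add: invol_chart_def)
qed

lemma bij_invol_chart: "bij (invol_chart f)"
proof -
  have mono: "x \<le> y \<Longrightarrow> f y \<le> f x" for x y
    using decreasing_less_iff[OF decreasing_f, of x y] by (metis not_less)
  have "surj (invol_chart f)"
  proof (rule strict_mono_surj[OF _ strict_mono_invol_chart])
    show "continuous_on UNIV (invol_chart f)"
      by (meson DERIV_invol_chart DERIV_isCont continuous_at_imp_continuous_on)
    show "\<exists>x. invol_chart f x \<le> t" for t
    proof -
      define x where "x = -2 * \<bar>t\<bar> - \<bar>f 0\<bar>"
      have "f 0 \<le> f x" by (rule mono) (simp add: x_def)
      then have "x - f x \<le> 2 * t" using x_def abs_ge_minus_self[of t] abs_ge_minus_self[of "f 0"] by linarith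
      then have "invol_chart f x \<le> t" by (simp add: invol_chart_def)
      then show ?thesis by blast
    qed
    show "\<exists>x. invol_chart f x \<ge> t" for t
    proof -
      define x where "x = 2 * \<bar>t\<bar> + \<bar>f 0\<bar>"
      have "f x \<le> f 0" by (rule mono) (simp add: x_def)
      then have "x - f x \<ge> 2 * t" using x_def abs_ge_self[of t] abs_ge_self[of "f 0"] by linarith
      then have "invol_chart f x \<ge> t" by (simp add: invol_chart_def)
      then show ?thesis by blast
    qed
  qed
  then show ?thesis by (simp add: bij_def strict_mono_imp_inj_on strict_mono_invol_chart)
qed

lemma diffeo_invol_chart: "diffeo (invol_chart f)"
proof (rule diffeoI[OF smooth_invol_chart bij_invol_chart])
  show "deriv (invol_chart f) x \<noteq> 0" for x using invol_chart_deriv_ge[of x] by linarith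
qed

end

lemma deriv_involution_at_fixed_point:
  fixes f :: "real \<Rightarrow> real"
  assumes "smooth_real f" "\<forall>x y. x < y \<longrightarrow> f y < f x" "f 0 = 0" "\<forall>\<^sub>F x in nhds 0. f (f x) = x"
  shows "deriv f 0 = -1"
proof -
  have "DERIV (\<lambda>x. f (f x)) 0 :> deriv f 0 * deriv f 0"
    using DERIV_chain2[OF smooth_DERIV smooth_DERIV, of f f 0] assms(1,3) by simp
  moreover have "DERIV (\<lambda>x. f (f x)) 0 :> 1"
    by (subst DERIV_cong_ev[OF refl assms(4) refl]) simp
  ultimately have "deriv f 0 * deriv f 0 = 1" by (rule DERIV_unique)
  then have "(deriv f 0 + 1) * (deriv f 0 - 1) = 0" by (simp add: algebra_simps)
  moreover have "deriv f 0 \<le> 0" by (rule decreasing_deriv_nonpos[OF smooth_DERIV[OF assms(1)] assms(2)])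
  ultimately show ?thesis by auto
qed

lemma local_conjugacy:
  fixes f g :: "real \<Rightarrow> real"
  assumes f: "smooth_real f" "\<forall>x y. x < y \<longrightarrow> f y < f x" "f 0 = 0" "\<forall>\<^sub>F x in nhds 0. f (f x) = x"
    and g: "smooth_real g" "\<forall>x y. x < y \<longrightarrow> g y < g x" "g 0 = 0" "\<forall>\<^sub>F x in nhds 0. g (g x) = x"
  obtains k0 where "smooth_real k0" "k0 0 = 0" "deriv k0 0 = 1" "\<And>x. deriv k0 x > 0"
    "\<forall>\<^sub>F x in nhds 0. k0 (f x) = g (k0 x)"
proof -
  let ?F = "invol_chart f" and ?G = "invol_chart g"
  define k0 where "k0 = (\<lambda>x. inv ?G (?F x))"
  have G: "diffeo ?G" "bij ?G" by (simp_all add: diffeo_invol_chart[OF g(1,2)] bij_invol_chart[OF g(1,2)])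
  have G_k0: "?G (k0 x) = ?F x" for x
    using G(2) by (simp add: k0_def bij_is_surj surj_f_inv_f)
  have F0: "?F 0 = 0" and G0: "?G 0 = 0" using f(3) g(3) by (simp_all add: invol_chart_def)
  have k0_0: "k0 0 = 0"
    using inv_f_f[OF bij_is_inj[OF G(2)], of 0] F0 G0 by (simp add: k0_def)
  have smooth_k0: "smooth_real k0"
    using smooth_comp[OF _ smooth_invol_chart[OF f(1,2)], of "inv ?G"] G(1) by (simp add: k0_def diffeo_def)
  have chain: "deriv ?G (k0 x) * deriv k0 x = deriv ?F x" for x
  proof -
    have "DERIV (\<lambda>x. ?G (k0 x)) x :> deriv ?G (k0 x) * deriv k0 x"
      by (rule DERIV_chain2[OF smooth_DERIV[OF smooth_invol_chart[OF g(1,2)]] smooth_DERIV[OF smooth_k0]])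
    moreover have "DERIV (\<lambda>x. ?G (k0 x)) x :> deriv ?F x"
      unfolding G_k0 by (rule smooth_DERIV[OF smooth_invol_chart[OF f(1,2)]])
    ultimately show ?thesis by (rule DERIV_unique)
  qed
  have k0_pos: "deriv k0 x > 0" for x
  proof -
    have G': "0 < deriv ?G (k0 x)" using invol_chart_deriv_ge[OF g(1,2), of "k0 x"] by simp
    have "0 < deriv ?G (k0 x) * deriv k0 x"
      unfolding chain using invol_chart_deriv_ge[OF f(1,2), of x] by simp
    then show ?thesis by (rule zero_less_mult_pos[OF _ G'])
  qed
  have F'0: "deriv ?F 0 = 1" and G'0: "deriv ?G 0 = 1"
    using DERIV_imp_deriv[OF DERIV_invol_chart[OF f(1,2), of 0]]
      DERIV_imp_deriv[OF DERIV_invol_chart[OF g(1,2), of 0]]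
      deriv_involution_at_fixed_point[OF f] deriv_involution_at_fixed_point[OF g] by simp_all
  have k0_1: "deriv k0 0 = 1" using chain[of 0] k0_0 F'0 G'0 by simp
  have "\<forall>\<^sub>F y in nhds (k0 0). g (g y) = y" using g(4) k0_0 by simp
  then have "\<forall>\<^sub>F x in nhds 0. g (g (k0 x)) = k0 x"
    by (rule eventually_nhds_isCont_compose[OF DERIV_isCont[OF smooth_DERIV[OF smooth_k0]]])
  then have conj: "\<forall>\<^sub>F x in nhds 0. k0 (f x) = g (k0 x)"
    using f(4)
  proof eventually_elim
    case (elim x)
    have "?G (g (k0 x)) = - ?G (k0 x)" using invol_chart_flip[of g "k0 x"] elim(1) by simp
    also have "\<dots> = ?G (k0 (f x))" using invol_chart_flip[of f x] elim(2) by (simp add: G_k0)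
    finally have "g (k0 x) = k0 (f x)" by (rule injD[OF bij_is_inj[OF G(2)]])
    then show ?case by simp
  qed
  show ?thesis by (rule that[OF smooth_k0 k0_0 k0_1 k0_pos conj])
qed

section \<open>Deforming a local conjugacy into the identity\<close>

lemma near_identity_estimate:
  fixes k :: "real \<Rightarrow> real"
  assumes "smooth_real k" "k 0 = 0" "deriv k 0 = 1" "\<epsilon> > 0"
  obtains \<eta> where "\<eta> > 0" "\<And>x. \<bar>x\<bar> < \<eta> \<Longrightarrow> \<bar>deriv k x - 1\<bar> < \<epsilon>"
    "\<And>y. 0 \<le> y \<Longrightarrow> y < \<eta> \<Longrightarrow> \<bar>k y - y\<bar> \<le> \<epsilon> * y"
proof -
  have "isCont (deriv k) 0"
    using smooth_DERIV[OF smooth_deriv[OF assms(1)]] DERIV_isCont by blast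
  then obtain \<eta> where \<eta>: "\<eta> > 0" "\<forall>x. \<bar>x\<bar> < \<eta> \<longrightarrow> \<bar>deriv k x - 1\<bar> < \<epsilon>"
    unfolding continuous_at_eps_delta using assms(3,4) by (force simp: dist_real_def)
  have "\<bar>k y - y\<bar> \<le> \<epsilon> * y" if y: "0 \<le> y" "y < \<eta>" for y
  proof (cases "y = 0")
    case True then show ?thesis using assms(2) by simp
  next
    case False
    then obtain z where z: "0 < z" "z < y" "k y - k 0 = (y - 0) * deriv k z"
      using MVT2[of 0 y k "deriv k"] smooth_DERIV[OF assms(1)] y by force
    then have "k y - y = y * (deriv k z - 1)" using assms(2) by (simp add: algebra_simps)
    then have "\<bar>k y - y\<bar> = y * \<bar>deriv k z - 1\<bar>" using y by (simp add: abs_mult)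
    also have "\<dots> \<le> y * \<epsilon>"
    proof (rule mult_left_mono)
      show "\<bar>deriv k z - 1\<bar> \<le> \<epsilon>" using \<eta>(2) z y by (simp add: less_imp_le)
    qed (use y in simp)
    finally show ?thesis by (simp add: mult.commute)
  qed
  with \<eta> that show ?thesis by blast
qed

lemma cutoff_slope_pos:
  fixes r r' u v C a \<epsilon> :: real
  assumes "0 \<le> r" "r \<le> 1" "\<bar>r'\<bar> \<le> C / a" "\<bar>u\<bar> \<le> \<epsilon> * (2 * a)" "\<bar>v\<bar> \<le> \<epsilon>"
    and "a > 0" "(2 * C + 1) * \<epsilon> \<le> 1/2"
  shows "1 + r' * u + r * v > 0"
proof -
  have "\<bar>r' * u\<bar> \<le> (C / a) * (\<epsilon> * (2 * a))"
    unfolding abs_mult using assms(3,4) by (rule mult_mono) (use assms(3) in auto)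
  also have "\<dots> = 2 * C * \<epsilon>" using assms(6) by (simp add: field_simps)
  finally have "- (2 * C * \<epsilon>) \<le> r' * u" by (simp add: abs_le_iff)
  moreover have "\<bar>r * v\<bar> \<le> 1 * \<epsilon>" unfolding abs_mult using assms(1,2,5) by (intro mult_mono) auto
  then have "- \<epsilon> \<le> r * v" by (simp add: abs_le_iff)
  moreover have "2 * C * \<epsilon> + \<epsilon> \<le> 1/2" using assms(7) by (simp add: algebra_simps)
  ultimately show ?thesis by linarith
qed

lemma interpolate_to_identity:
  fixes k0 :: "real \<Rightarrow> real"
  assumes k0: "smooth_real k0" "k0 0 = 0" "deriv k0 0 = 1" "\<And>x. deriv k0 x > 0" and "b > 0"
  obtains a k where "0 < a" "smooth_real k" "\<And>x. deriv k x > 0"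
    "\<And>x. x \<le> a \<Longrightarrow> k x = k0 x" "\<And>x. x \<ge> b \<Longrightarrow> k x = x"
proof -
  obtain C where C: "C > 0" "\<And>a. a > 0 \<Longrightarrow> \<exists>\<rho>. smooth_real \<rho> \<and> (\<forall>x\<le>a. \<rho> x = 1)
      \<and> (\<forall>x\<ge>2 * a. \<rho> x = 0) \<and> (\<forall>x. 0 \<le> \<rho> x \<and> \<rho> x \<le> 1) \<and> (\<forall>x. \<bar>deriv \<rho> x\<bar> \<le> C / a)"
    using cutoff_family by blast
  define \<epsilon> where "\<epsilon> = 1 / (4 * (C + 1))"
  have \<epsilon>: "\<epsilon> > 0" "(2 * C + 1) * \<epsilon> \<le> 1/2" using C(1) by (auto simp: \<epsilon>_def field_simps)
  obtain \<eta> where \<eta>: "\<eta> > 0" "\<And>x. \<bar>x\<bar> < \<eta> \<Longrightarrow> \<bar>deriv k0 x - 1\<bar> < \<epsilon>"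
    "\<And>y. 0 \<le> y \<Longrightarrow> y < \<eta> \<Longrightarrow> \<bar>k0 y - y\<bar> \<le> \<epsilon> * y"
    using near_identity_estimate[OF k0(1-3) \<epsilon>(1)] by blast
  define a where "a = min b \<eta> / 4"
  have a: "0 < a" "2 * a \<le> b" "2 * a < \<eta>" using \<open>b > 0\<close> \<eta>(1) by (auto simp: a_def)
  obtain \<rho> where \<rho>: "smooth_real \<rho>" "\<forall>x\<le>a. \<rho> x = 1" "\<forall>x\<ge>2 * a. \<rho> x = 0"
    "\<forall>x. 0 \<le> \<rho> x \<and> \<rho> x \<le> 1" "\<forall>x. \<bar>deriv \<rho> x\<bar> \<le> C / a"
    using C(2)[OF a(1)] by blast
  define k where "k = (\<lambda>x. x + \<rho> x * (k0 x - x))"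
  have smooth_k: "smooth_real k"
    unfolding k_def by (rule smooth_add[OF smooth_id smooth_mult[OF \<rho>(1) smooth_diff[OF k0(1) smooth_id]]])
  have DERIV_k: "DERIV k x :> 1 + deriv \<rho> x * (k0 x - x) + \<rho> x * (deriv k0 x - 1)" for x
    unfolding k_def using smooth_DERIV[OF \<rho>(1)] smooth_DERIV[OF k0(1)]
    by (auto intro!: derivative_eq_intros simp: algebra_simps)
  have "deriv k x > 0" for x
  proof -
    consider "x < a" | "a \<le> x \<and> x \<le> 2 * a" | "x > 2 * a" by linarith
    then show ?thesis
    proof cases
      case 1
      have "DERIV k x :> deriv k0 x"
        by (rule has_field_derivative_transform_within_open[OF smooth_DERIV[OF k0(1)], where S="{..<a}"])
           (use 1 \<rho>(2) in \<open>auto simp: k_def\<close>)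
      then show ?thesis using k0(4) DERIV_imp_deriv by metis
    next
      case 2
      have "\<bar>k0 x - x\<bar> \<le> \<epsilon> * x" using \<eta>(3)[of x] 2 a by auto
      also have "\<dots> \<le> \<epsilon> * (2 * a)" using 2 \<epsilon> by (intro mult_left_mono) auto
      finally have "1 + deriv \<rho> x * (k0 x - x) + \<rho> x * (deriv k0 x - 1) > 0"
        using \<rho>(4,5) \<eta>(2)[of x] 2 a \<epsilon>(2) by (intro cutoff_slope_pos) auto
      then show ?thesis using DERIV_imp_deriv[OF DERIV_k] by simp
    next
      case 3
      have "DERIV k x :> 1"
        by (rule has_field_derivative_transform_within_open[OF DERIV_ident, where S="{2*a<..}"])
           (use 3 \<rho>(3) in \<open>auto simp: k_def\<close>)
      then show ?thesis using DERIV_imp_deriv by fastforce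
    qed
  qed
  moreover have "k x = k0 x" if "x \<le> a" for x using \<rho>(2) that by (simp add: k_def)
  moreover have "k x = x" if "x \<ge> b" for x using \<rho>(3) that a(2) by (simp add: k_def)
  ultimately show ?thesis using that a(1) smooth_k by blast
qed

section \<open>Extending a conjugacy from the positive half-line\<close>

(* On the negative half-line the values are forced by k \<circ> f = g \<circ> k, as f swaps the half-lines. *)
definition extend_conj :: "(real \<Rightarrow> real) \<Rightarrow> (real \<Rightarrow> real) \<Rightarrow> (real \<Rightarrow> real) \<Rightarrow> real \<Rightarrow> real" where
  "extend_conj f g k x = (if 0 \<le> x then k x else g (k (inv f x)))"

context
  fixes f g k :: "real \<Rightarrow> real"
  assumes bij_f: "bij f" and decreasing_f: "\<forall>x y. x < y \<longrightarrow> f y < f x" and f0: "f 0 = 0"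
    and bij_g: "bij g" and decreasing_g: "\<forall>x y. x < y \<longrightarrow> g y < g x" and g0: "g 0 = 0"
    and mono_k: "strict_mono k" and k_0: "k 0 = 0"
begin

lemma f_neg_iff: "f x < 0 \<longleftrightarrow> 0 < x"
  using decreasing_less_iff[OF decreasing_f, of x 0] f0 by simp

lemma f_pos_iff: "0 < f x \<longleftrightarrow> x < 0"
  using decreasing_less_iff[OF decreasing_f, of 0 x] f0 by simp

lemma g_neg_iff: "g x < 0 \<longleftrightarrow> 0 < x"
  using decreasing_less_iff[OF decreasing_g, of x 0] g0 by simp

lemma inv_f_pos: "x < 0 \<Longrightarrow> 0 < inv f x"
  using f_neg_iff[of "inv f x"] bij_f by (simp add: bij_is_surj surj_f_inv_f)

lemma strict_mono_extend_conj: "strict_mono (extend_conj f g k)"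
proof (rule strict_monoI)
  fix x y :: real assume "x < y"
  consider "0 \<le> x" | "x < 0" "0 \<le> y" | "y < 0" using \<open>x < y\<close> by linarith
  then show "extend_conj f g k x < extend_conj f g k y"
  proof cases
    case 1 then show ?thesis using \<open>x < y\<close> mono_k by (simp add: extend_conj_def strict_mono_less)
  next
    case 2
    have "g (k (inv f x)) < 0"
      using inv_f_pos[OF 2(1)] mono_k k_0 g_neg_iff by (metis strict_mono_less)
    moreover have "0 \<le> k y" using 2(2) mono_k k_0 by (metis strict_mono_less_eq)
    ultimately show ?thesis using 2 by (simp add: extend_conj_def)
  next
    case 3
    have "inv f y < inv f x" using decreasing_inv[OF bij_f decreasing_f] \<open>x < y\<close> by blast
    then have "k (inv f y) < k (inv f x)" using mono_k by (simp add: strict_mono_less)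
    then show ?thesis using 3 \<open>x < y\<close> decreasing_g by (simp add: extend_conj_def)
  qed
qed

lemma surj_extend_conj:
  assumes "\<And>z. 0 \<le> z \<Longrightarrow> \<exists>w\<ge>0. k w = z"
  shows "surj (extend_conj f g k)"
proof -
  have "\<exists>x. extend_conj f g k x = y" for y
  proof (cases "0 \<le> y")
    case True
    then obtain w where "w \<ge> 0" "k w = y" using assms by blast
    then show ?thesis by (auto simp: extend_conj_def)
  next
    case False
    define z where "z = inv g y"
    have gz: "g z = y" unfolding z_def by (rule surj_f_inv_f[OF bij_is_surj[OF bij_g]])
    have "0 < z" using g_neg_iff[of z] gz False by simp
    then obtain w where "w \<ge> 0" "k w = z" using assms[of z] by auto
    then have "0 < w" using \<open>0 < z\<close> k_0 by (cases "w = 0") simp_all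
    then have "extend_conj f g k (f w) = y"
      using f_neg_iff[of w] gz bij_f \<open>k w = z\<close> by (simp add: extend_conj_def bij_is_inj)
    then show ?thesis by blast
  qed
  then show ?thesis by (metis surjI)
qed

lemma extend_conj_conjugates:
  assumes "\<And>x. f (f x) = g (g x)" "\<And>y. 0 \<le> y \<Longrightarrow> k (f (f y)) = f (f (k y))"
  shows "extend_conj f g k (f x) = g (extend_conj f g k x)"
proof -
  consider "x = 0" | "0 < x" | "x < 0" by linarith
  then show ?thesis
  proof cases
    case 1 then show ?thesis using f0 g0 k_0 by (simp add: extend_conj_def)
  next
    case 2 then show ?thesis using f_neg_iff[of x] bij_f by (simp add: extend_conj_def bij_is_inj)
  next
    case 3
    define w where "w = inv f x"
    have w: "0 < w" "f w = x" using inv_f_pos[OF 3] bij_f by (simp_all add: w_def bij_is_surj surj_f_inv_f)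
    have "extend_conj f g k (f x) = k (f (f w))"
      using 3 f_pos_iff[of x] w(2) by (simp add: extend_conj_def)
    also have "\<dots> = f (f (k w))" using assms(2) w(1) by simp
    also have "\<dots> = g (g (k w))" by (rule assms(1))
    also have "\<dots> = g (extend_conj f g k x)" using 3 by (simp add: extend_conj_def w_def)
    finally show ?thesis .
  qed
qed

lemma extend_conj_near_0:
  assumes "isCont f 0" "a > 0" "\<And>x. x \<le> a \<Longrightarrow> k x = k0 x"
    and "\<forall>\<^sub>F x in nhds 0. f (f x) = x" "\<forall>\<^sub>F x in nhds 0. k0 (f x) = g (k0 x)"
  shows "\<forall>\<^sub>F x in nhds 0. extend_conj f g k x = k0 x"
proof -
  have small: "\<forall>\<^sub>F x in nhds 0. x < a"
    using eventually_nhds_in_open[of "{..<a}" 0] assms(2) by simp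
  moreover have "\<forall>\<^sub>F x in nhds (f 0). x < a" using small f0 by simp
  then have "\<forall>\<^sub>F x in nhds 0. f x < a" by (rule eventually_nhds_isCont_compose[OF assms(1)])
  moreover have "\<forall>\<^sub>F x in nhds 0. k0 (f (f x)) = g (k0 (f x))"
    using eventually_nhds_isCont_compose[OF assms(1), of "\<lambda>y. k0 (f y) = g (k0 y)"] assms(5) f0
    by simp
  ultimately show ?thesis using assms(4)
  proof eventually_elim
    case (elim x)
    show ?case
    proof (cases "0 \<le> x")
      case True then show ?thesis using elim assms(3) by (simp add: extend_conj_def)
    next
      case False
      have "inv f x = f x" using elim(4) inv_f_f[OF bij_is_inj[OF bij_f], of "f x"] by simp
      moreover have "0 < f x" using False f_pos_iff by simp
      ultimately show ?thesis using False elim assms(3)[of "f x"] by (simp add: extend_conj_def)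
    qed
  qed
qed

lemma diffeo_plus_extend_conj:
  assumes "diffeo f" "diffeo g" "smooth_real k" "\<And>x. deriv k x > 0" "surj (extend_conj f g k)"
    and "smooth_real k0" "deriv k0 0 \<noteq> 0" "\<forall>\<^sub>F x in nhds 0. extend_conj f g k x = k0 x"
  shows "diffeo_plus (extend_conj f g k)"
proof -
  let ?k = "extend_conj f g k"
  have local: "\<exists>s. smooth_real s \<and> (\<forall>\<^sub>F y in nhds x. ?k y = s y) \<and> deriv s x \<noteq> 0" for x
  proof -
    consider "0 < x" | "x < 0" | "x = 0" by linarith
    then show ?thesis
    proof cases
      case 1
      have "\<forall>\<^sub>F y in nhds x. ?k y = k y"
        using eventually_nhds_in_open[of "{0<..}" x] 1 by (auto elim!: eventually_mono simp: extend_conj_def)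
      then show ?thesis using assms(3) assms(4)[of x] by (intro exI[of _ k]) auto
    next
      case 2
      let ?s = "\<lambda>y. g (k (inv f y))"
      have sm: "smooth_real g" "smooth_real (inv f)" using assms(1,2) by (simp_all add: diffeo_def)
      have "\<forall>\<^sub>F y in nhds x. ?k y = ?s y"
        using eventually_nhds_in_open[of "{..<0}" x] 2 by (auto elim!: eventually_mono simp: extend_conj_def)
      moreover have "smooth_real ?s" by (rule smooth_comp[OF sm(1) smooth_comp[OF assms(3) sm(2)]])
      moreover have "deriv ?s x = deriv g (k (inv f x)) * (deriv k (inv f x) * deriv (inv f) x)"
        by (simp add: deriv_comp_smooth[OF sm(1) smooth_comp[OF assms(3) sm(2)]]
            deriv_comp_smooth[OF assms(3) sm(2)])
      then have "deriv ?s x \<noteq> 0"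
        using diffeo_deriv_nonzero[OF assms(2)] diffeo_deriv_nonzero[OF diffeo_inv[OF assms(1)]]
          assms(4)[of "inv f x"] by simp
      ultimately show ?thesis by blast
    next
      case 3 then show ?thesis using assms(6-8) by blast
    qed
  qed
  have "smooth_real ?k" using local by (intro smooth_locally) blast
  moreover have "bij ?k"
    using strict_mono_extend_conj assms(5) by (simp add: bij_def strict_mono_imp_inj_on)
  moreover have "deriv ?k x \<noteq> 0" for x
  proof -
    obtain s where "smooth_real s" "\<forall>\<^sub>F y in nhds x. ?k y = s y" "deriv s x \<noteq> 0" using local by blast
    then show ?thesis using deriv_cong_ev[of ?k s x x] by simp
  qed
  ultimately show ?thesis using strict_mono_extend_conj by (simp add: diffeo_plus_def diffeoI)
qed

end

lemma commute_on_half_line: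
  fixes k F :: "real \<Rightarrow> real"
  assumes "strict_mono k" "k 0 = 0" "\<And>x. b \<le> x \<Longrightarrow> k x = x"
    and "strict_mono F" "0 \<le> b" "\<And>x. 0 \<le> x \<Longrightarrow> x \<le> b \<Longrightarrow> F x = x" "0 \<le> y"
  shows "k (F y) = F (k y)"
proof (cases "y \<le> b")
  case True
  have "k 0 \<le> k y" "k y \<le> k b" using assms(1,7) True by (simp_all add: strict_mono_less_eq)
  then show ?thesis using assms(2,3,5,6,7) True by simp
next
  case False
  have "F b < F y" using assms(4) False by (simp add: strict_mono_less)
  then show ?thesis using assms(3,5,6) False by simp
qed

lemma conjugacy_of_locally_involutive:
  fixes f g :: "real \<Rightarrow> real"
  assumes "diffeo_minus f" "diffeo_minus g" "f 0 = 0" "g 0 = 0" "\<And>x. f (f x) = g (g x)"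
    and "\<forall>\<^sub>F x in nhds 0. f (f x) = x"
  obtains k where "diffeo_plus k" "k 0 = 0" "\<And>x. k (f x) = g (k x)"
proof -
  have f: "diffeo f" "bij f" "smooth_real f" "\<forall>x y. x < y \<longrightarrow> f y < f x"
    and g: "diffeo g" "bij g" "smooth_real g" "\<forall>x y. x < y \<longrightarrow> g y < g x"
    using assms(1,2) by (auto simp: diffeo_minus_def diffeo_def)
  have "\<forall>\<^sub>F x in nhds 0. g (g x) = x" using assms(6) by (simp add: assms(5))
  then obtain k0 where k0: "smooth_real k0" "k0 0 = 0" "deriv k0 0 = 1" "\<And>x. deriv k0 x > 0"
    "\<forall>\<^sub>F x in nhds 0. k0 (f x) = g (k0 x)"
    using local_conjugacy[OF f(3,4) assms(3,6) g(3,4) assms(4)] by blast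
  obtain d where d: "d > 0" "\<And>x. \<bar>x\<bar> < d \<Longrightarrow> f (f x) = x"
    using assms(6) by (auto simp: eventually_nhds_metric dist_real_def)
  have "d/2 > 0" using d(1) by simp
  then obtain a k where a: "0 < a" and k: "smooth_real k" "\<And>x. deriv k x > 0"
    "\<And>x. x \<le> a \<Longrightarrow> k x = k0 x" "\<And>x. x \<ge> d/2 \<Longrightarrow> k x = x"
    by (rule interpolate_to_identity[OF k0(1-4)]) blast
  have k_0: "k 0 = 0" using k(3)[OF less_imp_le[OF a]] k0(2) by simp
  have pos: "\<exists>D. DERIV k x :> D \<and> D > 0" for x using smooth_DERIV[OF k(1)] k(2) by blast
  have mono: "strict_mono k"
  proof (rule strict_monoI)
    show "k x < k y" if "x < y" for x y by (rule DERIV_pos_imp_increasing[OF that pos])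
  qed
  have onto: "\<exists>w\<ge>0. k w = z" if "0 \<le> z" for z
  proof -
    have "k 0 \<le> z" "z \<le> k (max z (d/2))" using that k_0 k(4)[of "max z (d/2)"] by auto
    moreover have "continuous_on {0..max z (d/2)} k"
      using smooth_DERIV[OF k(1)] by (meson DERIV_isCont continuous_at_imp_continuous_on)
    ultimately show ?thesis using IVT'[of k 0 z "max z (d/2)"] that by force
  qed
  have ff_mono: "strict_mono (\<lambda>x. f (f x))" using f(4) by (auto intro: strict_monoI)
  have comm: "k (f (f y)) = f (f (k y))" if "0 \<le> y" for y
    using commute_on_half_line[where b = "d/2", OF mono k_0 k(4) ff_mono] d that by simp
  let ?k = "extend_conj f g k"
  note ctx = f(2,4) assms(3) g(2,4) assms(4) mono k_0
  have "isCont f 0" using diffeo_DERIV[OF f(1)] DERIV_isCont by blast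
  then have "\<forall>\<^sub>F x in nhds 0. ?k x = k0 x"
    using extend_conj_near_0[OF ctx _ a k(3) assms(6) k0(5)] by blast
  then have "diffeo_plus ?k"
    using diffeo_plus_extend_conj[OF ctx f(1) g(1) k(1,2) surj_extend_conj[OF ctx onto] k0(1)] k0(3) by simp
  moreover have "?k 0 = 0" using k_0 by (simp add: extend_conj_def)
  moreover have "?k (f x) = g (?k x)" for x by (rule extend_conj_conjugates[OF ctx assms(5) comm])
  ultimately show ?thesis by (rule that)
qed

theorem theorem4p1:
  fixes f g :: "real \<Rightarrow> real"
  assumes "diffeo_minus f" and "diffeo_minus g"
    and "f 0 = 0" and "g 0 = 0"
    and "f \<circ> f = g \<circ> g"
    and "0 \<in> interior {x. f (f x) = x}"
  shows "(\<exists>h. diffeo_plus h \<and> h 0 = 0 \<and> h \<circ> (f \<circ> f) = (f \<circ> f) \<circ> h \<and>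
            taylor0 f = fps_inv (taylor0 h) oo taylor0 g oo taylor0 h)
       \<and> (\<exists>k. diffeo_plus k \<and> f = inv k \<circ> g \<circ> k)"
proof -
  have ff: "f (f x) = g (g x)" for x using assms(5) by (simp add: fun_eq_iff)
  have "\<forall>\<^sub>F x in nhds 0. f (f x) = x"
    using eventually_nhds_in_open[OF open_interior assms(6)]
    by (rule eventually_mono) (use interior_subset in blast)
  then obtain k where k: "diffeo_plus k" "k 0 = 0" "\<And>x. k (f x) = g (k x)"
    using conjugacy_of_locally_involutive[OF assms(1-4) ff] by blast
  have dk: "diffeo k" using k(1) by (simp add: diffeo_plus_def)
  have "inj k" using dk by (simp add: diffeo_def bij_is_inj)
  then have conj: "f = inv k \<circ> g \<circ> k" by (simp add: fun_eq_iff flip: k(3))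
  have "k (f (f x)) = f (f (k x))" for x using k(3)[of "f x"] k(3)[of x] ff[of "k x"] by simp
  then have comm: "k \<circ> (f \<circ> f) = (f \<circ> f) \<circ> k" by (simp add: fun_eq_iff)
  have "smooth_real g" using assms(2) by (simp add: diffeo_minus_def diffeo_def)
  with conj have "taylor0 f = fps_inv (taylor0 k) oo taylor0 g oo taylor0 k"
    using taylor0_conj[where g = g, OF dk k(2) _ assms(4)] by simp
  with k(1,2) comm conj show ?thesis by blast
qed

end
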